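(* The map $M\mapsto\mathfrak W_M$ is a bijection from the set of submonoids of $(\mathbb N_0,+)$ onto the set of bracket pattern categories.
   Context: $\mathbb N=\{1,2,\dots\}$, $\mathbb N_0=\mathbb N\cup\{0\}$. A bracket pattern is a non-empty finite subset $w\subseteq\mathbb N$; $\|w\|:=\max(w)$. For bracket patterns $w,w'$: superposition $w\cup w'$; for $j\in w$ the projection $\cap_j w:=\{i\in w\mid i\le j\}$; the dual $w^\dagger:=\{\|w\|-i\mid i\in\mathbb N_0,\ i<\|w\|,\ i\notin w\}$. A bracket pattern category is a (possibly empty) set of bracket patterns closed under superposition, duals and projections. The completion of a bracket pattern $w$ is $A(w):=\{j-i\mid j\in w,\ i\in\mathbb N_0,\ i\notin w,\ i<j\}$. For a submonoid $M$ of $(\mathbb N_0,+)$ (a subset containing $0$ and closed under addition), $\mathfrak W_M:=\{w\mid w\text{ bracket pattern},\ A(w)\subseteq\mathbb N_0\setminus M\}$. *)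

theory Defs
  imports Main
begin

definition bracket_pattern :: "nat set \<Rightarrow> bool" where
  "bracket_pattern w \<longleftrightarrow> finite w \<and> w \<noteq> {} \<and> 0 \<notin> w"

definition bp_norm :: "nat set \<Rightarrow> nat" where
  "bp_norm w = Max w"

definition bp_proj :: "nat \<Rightarrow> nat set \<Rightarrow> nat set" where
  "bp_proj j w = {i \<in> w. i \<le> j}"

definition bp_dual :: "nat set \<Rightarrow> nat set" where
  "bp_dual w = {bp_norm w - i | i. i < bp_norm w \<and> i \<notin> w}"

definition bp_category :: "nat set set \<Rightarrow> bool" where
  "bp_category C \<longleftrightarrow>
     (\<forall>w\<in>C. bracket_pattern w) \<and>
     (\<forall>w\<in>C. \<forall>w'\<in>C. w \<union> w' \<in> C) \<and>
     (\<forall>w\<in>C. bp_dual w \<in> C) \<and>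
     (\<forall>w\<in>C. \<forall>j\<in>w. bp_proj j w \<in> C)"

definition completion :: "nat set \<Rightarrow> nat set" where
  "completion w = {j - i | j i. j \<in> w \<and> i \<notin> w \<and> i < j}"

definition submonoid_N0 :: "nat set \<Rightarrow> bool" where
  "submonoid_N0 M \<longleftrightarrow> 0 \<in> M \<and> (\<forall>a\<in>M. \<forall>b\<in>M. a + b \<in> M)"

definition W_of :: "nat set \<Rightarrow> nat set set" where
  "W_of M = {w. bracket_pattern w \<and> completion w \<subseteq> - M}"

end

theory Submission
  imports Defs
begin

text \<open>The completion of a union, dual or projection is covered by the completions of the
  patterns it is built from, so every \<open>W_of M\<close> is a category, and the inverse map sends a
  category \<open>C\<close> to the complement \<open>monoid_of C\<close> of all completions of its members. For a
  submonoid \<open>M\<close> and \<open>x \<notin> M\<close>, the pattern \<open>{..x} - M\<close> lies in \<open>W_of M\<close> and has \<open>x\<close> in its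
  completion, so \<open>monoid_of (W_of M) = M\<close>.

  Conversely, in a category \<open>C\<close> every gap \<open>k \<notin> monoid_of C\<close> is the norm of a dual of a
  projection, and the union of such patterns is \<open>{..k} - monoid_of C \<in> C\<close>; this makes
  \<open>monoid_of C\<close> additively closed. Dualising a union of duals intersects a pattern with a
  right-aligned copy of another one, so \<open>C\<close> is closed under these intersections. A pattern
  \<open>v\<close> of norm \<open>n\<close> whose completion avoids \<open>monoid_of C\<close> is then cut out of
  \<open>{..n} - monoid_of C\<close> by intersecting, for each \<open>i \<notin> v\<close> below \<open>n\<close>, with a right-aligned
  copy of \<open>{..n - i} - monoid_of C\<close>.\<close>

lemma bracket_pattern_Max_in: "bracket_pattern w \<Longrightarrow> Max w \<in> w"
  unfolding bracket_pattern_def by simp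

lemma bracket_pattern_le_Max: "bracket_pattern w \<Longrightarrow> x \<in> w \<Longrightarrow> x \<le> Max w"
  unfolding bracket_pattern_def by simp

lemma bracket_pattern_pos: "bracket_pattern w \<Longrightarrow> x \<in> w \<Longrightarrow> 0 < x"
  unfolding bracket_pattern_def by (cases x) auto

lemma mem_bp_dual: "k \<in> bp_dual w \<longleftrightarrow> 0 < k \<and> k \<le> Max w \<and> Max w - k \<notin> w"
  unfolding bp_dual_def bp_norm_def by (auto intro!: exI[of _ "Max w - k"])

lemma Max_in_bp_dual: "bracket_pattern w \<Longrightarrow> Max w \<in> bp_dual w"
  by (auto simp: mem_bp_dual bracket_pattern_Max_in bracket_pattern_pos bracket_pattern_def)

lemma bracket_pattern_bp_dual:
  assumes "bracket_pattern w" shows "bracket_pattern (bp_dual w)"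
proof -
  have "bp_dual w \<subseteq> {0<..Max w}"
    by (auto simp: mem_bp_dual)
  then show ?thesis
    using Max_in_bp_dual[OF assms] unfolding bracket_pattern_def by (auto intro: finite_subset)
qed

lemma Max_bp_dual: "bracket_pattern w \<Longrightarrow> Max (bp_dual w) = Max w"
  using bracket_pattern_bp_dual Max_in_bp_dual
  by (intro Max_eqI) (auto simp: bracket_pattern_def mem_bp_dual)

lemma zero_notin_completion: "0 \<notin> completion w"
  unfolding completion_def by auto

lemma subset_completion: "0 \<notin> w \<Longrightarrow> w \<subseteq> completion w"
proof
  fix x assume "0 \<notin> w" "x \<in> w"
  then have "x = x - 0 \<and> x \<in> w \<and> 0 \<notin> w \<and> 0 < x"
    by (cases x) auto
  then show "x \<in> completion w"
    unfolding completion_def by blast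
qed

lemma completion_Un: "completion (w \<union> w') \<subseteq> completion w \<union> completion w'"
  unfolding completion_def by blast

lemma completion_bp_proj: "completion (bp_proj j w) \<subseteq> completion w"
  unfolding completion_def bp_proj_def by force

text \<open>Reflection about \<open>Max w\<close> turns a pair \<open>i \<notin> bp_dual w < j \<in> bp_dual w\<close> into
  \<open>Max w - j \<notin> w < Max w - i \<in> w\<close> with the same difference.\<close>
lemma completion_bp_dual:
  assumes "bracket_pattern w" shows "completion (bp_dual w) \<subseteq> completion w"
proof
  fix x assume "x \<in> completion (bp_dual w)"
  then obtain j i where x: "x = j - i" "j \<in> bp_dual w" "i \<notin> bp_dual w" "i < j"
    unfolding completion_def by auto
  define n where "n = Max w"
  have j: "j \<le> n" "n - j \<notin> w"
    using x(2) by (auto simp: mem_bp_dual n_def)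
  have "n - i \<in> w"
    using x(3,4) j bracket_pattern_Max_in[OF assms] by (cases "i = 0") (auto simp: mem_bp_dual n_def)
  moreover have "x = (n - i) - (n - j)" "n - j < n - i"
    using x j by auto
  ultimately show "x \<in> completion w"
    using j unfolding completion_def by blast
qed

lemma bracket_pattern_bp_proj: "bracket_pattern w \<Longrightarrow> j \<in> w \<Longrightarrow> bracket_pattern (bp_proj j w)"
  unfolding bracket_pattern_def bp_proj_def by auto

lemma Max_bp_proj: "bracket_pattern w \<Longrightarrow> j \<in> w \<Longrightarrow> Max (bp_proj j w) = j"
  using bracket_pattern_bp_proj by (intro Max_eqI) (auto simp: bracket_pattern_def bp_proj_def)

lemma bp_category_W_of: "bp_category (W_of M)"
  unfolding bp_category_def W_of_def
proof (intro conjI ballI; clarify)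
  fix w w' assume "bracket_pattern w" "completion w \<subseteq> - M" "bracket_pattern w'" "completion w' \<subseteq> - M"
  then show "bracket_pattern (w \<union> w') \<and> completion (w \<union> w') \<subseteq> - M"
    using completion_Un[of w w'] unfolding bracket_pattern_def by auto
qed (use bracket_pattern_bp_dual completion_bp_dual bracket_pattern_bp_proj completion_bp_proj in blast)+

definition monoid_of :: "nat set set \<Rightarrow> nat set" where
  "monoid_of C = - (\<Union>w\<in>C. completion w)"

lemma bracket_pattern_atMost_Diff:
  "0 \<in> M \<Longrightarrow> k \<notin> M \<Longrightarrow> bracket_pattern ({..k} - M)"
  unfolding bracket_pattern_def by (auto intro: finite_subset[of _ "{..k}"])

lemma Max_atMost_Diff: "(k::nat) \<notin> M \<Longrightarrow> Max ({..k} - M) = k"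
  by (intro Max_eqI) auto

lemma completion_atMost_Diff:
  assumes "submonoid_N0 M" shows "completion ({..k} - M) \<subseteq> - M"
proof
  fix y assume "y \<in> completion ({..k} - M)"
  then obtain j i where y: "y = j - i" "j \<in> {..k} - M" "i \<notin> {..k} - M" "i < j"
    unfolding completion_def by blast
  then have "i \<in> M" "j = y + i"
    by auto
  then show "y \<in> - M"
    using y(2) assms unfolding submonoid_N0_def by auto
qed

lemma monoid_of_W_of:
  assumes "submonoid_N0 M" shows "monoid_of (W_of M) = M"
proof (intro set_eqI iffI)
  fix x assume "x \<in> M"
  then show "x \<in> monoid_of (W_of M)"
    unfolding monoid_of_def W_of_def by auto
next
  fix x assume x: "x \<in> monoid_of (W_of M)"
  show "x \<in> M"
  proof (rule ccontr)
    assume "x \<notin> M"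
    moreover have "0 \<in> M"
      using assms unfolding submonoid_N0_def by blast
    ultimately have "{..x} - M \<in> W_of M" "x \<in> completion ({..x} - M)"
      using bracket_pattern_atMost_Diff completion_atMost_Diff[OF assms] subset_completion[of "{..x} - M"]
      unfolding W_of_def by auto
    then show False
      using x unfolding monoid_of_def by blast
  qed
qed

definition bp_shift :: "nat \<Rightarrow> nat set \<Rightarrow> nat set" where
  "bp_shift d w = {0<..<d} \<union> (+) d ` w"

lemma bp_shift_0 [simp]: "bp_shift 0 w = w"
  unfolding bp_shift_def by simp

lemma bp_dual_Un_bp_dual:
  assumes a: "bracket_pattern a" and b: "bracket_pattern b" and ba: "Max b \<le> Max a"
  shows "bp_dual (bp_dual a \<union> bp_dual b) = a \<inter> bp_shift (Max a - Max b) b"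
proof -
  define n where "n = Max a"
  define d where "d = Max a - Max b"
  have "Max (bp_dual a \<union> bp_dual b) = n"
    using bracket_pattern_bp_dual[OF a] bracket_pattern_bp_dual[OF b] ba
    by (simp add: Max_Un bracket_pattern_def Max_bp_dual[OF a] Max_bp_dual[OF b] n_def)
  then have "k \<in> bp_dual (bp_dual a \<union> bp_dual b) \<longleftrightarrow>
      0 < k \<and> k \<le> n \<and> (n - k = 0 \<or> k \<in> a) \<and> (n - k = 0 \<or> Max b < n - k \<or> Max b - (n - k) \<in> b)"
    for k
    by (auto simp: mem_bp_dual n_def)
  moreover have "0 < k \<and> k \<le> n \<and> (n - k = 0 \<or> k \<in> a) \<longleftrightarrow> k \<in> a" for k
    using bracket_pattern_pos[OF a] bracket_pattern_le_Max[OF a] bracket_pattern_Max_in[OF a]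
    unfolding n_def by (cases "k = Max a") auto
  moreover have "(n - k = 0 \<or> Max b < n - k \<or> Max b - (n - k) \<in> b) \<longleftrightarrow> k \<in> bp_shift d b"
    if "0 < k" "k \<le> n" for k
  proof (cases "k < d")
    case True
    then show ?thesis
      using that unfolding bp_shift_def d_def n_def by auto
  next
    case False
    then have "k \<in> bp_shift d b \<longleftrightarrow> k - d \<in> b"
      unfolding bp_shift_def by (force simp: image_iff)
    moreover have "n - k = 0 \<Longrightarrow> k - d = Max b" "Max b - (n - k) = k - d"
      using False that ba unfolding d_def n_def by auto
    ultimately show ?thesis
      using False bracket_pattern_Max_in[OF b] unfolding d_def n_def by auto
  qed
  ultimately show ?thesis
    unfolding d_def by blast
qed

context
  fixes C :: "nat set set"
  assumes C: "bp_category C"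
begin

lemma bp_category_bracket_pattern: "w \<in> C \<Longrightarrow> bracket_pattern w"
  using C unfolding bp_category_def by blast

lemma bp_category_Un: "w \<in> C \<Longrightarrow> w' \<in> C \<Longrightarrow> w \<union> w' \<in> C"
  using C unfolding bp_category_def by blast

lemma bp_category_bp_dual: "w \<in> C \<Longrightarrow> bp_dual w \<in> C"
  using C unfolding bp_category_def by blast

lemma bp_category_bp_proj: "w \<in> C \<Longrightarrow> j \<in> w \<Longrightarrow> bp_proj j w \<in> C"
  using C unfolding bp_category_def by blast

lemma bp_category_Union: "finite F \<Longrightarrow> F \<noteq> {} \<Longrightarrow> F \<subseteq> C \<Longrightarrow> \<Union>F \<in> C"
  by (induction F rule: finite_ne_induct) (auto intro: bp_category_Un)

lemma bp_category_Int_bp_shift: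
  "a \<in> C \<Longrightarrow> b \<in> C \<Longrightarrow> Max b \<le> Max a \<Longrightarrow> a \<inter> bp_shift (Max a - Max b) b \<in> C"
  using bp_dual_Un_bp_dual[of a b, symmetric]
  by (simp add: bp_category_bracket_pattern bp_category_bp_dual bp_category_Un)

lemma bp_category_Int: "a \<in> C \<Longrightarrow> b \<in> C \<Longrightarrow> Max a = Max b \<Longrightarrow> a \<inter> b \<in> C"
  using bp_category_Int_bp_shift[of a b] by simp

lemma bp_category_Inter:
  assumes "finite F" "F \<noteq> {}" "F \<subseteq> C" "\<forall>a\<in>F. Max a = n"
  shows "\<Inter>F \<in> C"
proof -
  have "\<Inter>F \<in> C \<and> Max (\<Inter>F) = n"
    using assms
  proof (induction F rule: finite_ne_induct)
    case (insert a F)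
    then have a: "a \<in> C" "Max a = n" and F: "\<Inter>F \<in> C" "Max (\<Inter>F) = n"
      by simp_all
    have "Max (a \<inter> \<Inter>F) = n"
    proof (rule Max_eqI)
      have ba: "bracket_pattern a" and bF: "bracket_pattern (\<Inter>F)"
        using a(1) F(1) by (simp_all add: bp_category_bracket_pattern)
      show "finite (a \<inter> \<Inter>F)"
        using ba unfolding bracket_pattern_def by simp
      show "n \<in> a \<inter> \<Inter>F"
        using bracket_pattern_Max_in[OF ba] bracket_pattern_Max_in[OF bF] a(2) F(2) by simp
      show "x \<le> n" if "x \<in> a \<inter> \<Inter>F" for x
        using bracket_pattern_le_Max[OF ba] that a(2) by simp
    qed
    then show ?case
      using a F bp_category_Int by simp
  qed simp
  then show ?thesis ..
qed

lemma bp_category_subset_Compl_monoid_of: "w \<in> C \<Longrightarrow> w \<subseteq> - monoid_of C"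
  using subset_completion[of w] bp_category_bracket_pattern[of w]
  unfolding monoid_of_def bracket_pattern_def by auto

text \<open>A gap \<open>j - i\<close> of \<open>u \<in> C\<close> is the norm of the dual of the projection of \<open>u\<close> to \<open>j\<close>.\<close>
lemma bp_category_ex_Max_eq:
  assumes "k \<notin> monoid_of C" shows "\<exists>p\<in>C. Max p = k"
proof -
  obtain u j i where u: "u \<in> C" "k = j - i" "j \<in> u" "i \<notin> u" "i < j"
    using assms unfolding monoid_of_def completion_def by blast
  define c where "c = bp_proj j u"
  have bu: "bracket_pattern u"
    using u(1) by (rule bp_category_bracket_pattern)
  have c: "c \<in> C" "Max c = j" "i \<notin> c"
    using u bp_category_bp_proj Max_bp_proj[OF bu] unfolding c_def bp_proj_def by auto
  have bc: "bracket_pattern c"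
    using c(1) by (rule bp_category_bracket_pattern)
  have "k \<in> bp_dual c"
    using u c by (auto simp: mem_bp_dual)
  moreover have "bp_dual c \<in> C"
    using c(1) by (rule bp_category_bp_dual)
  ultimately have "bp_proj k (bp_dual c) \<in> C" "Max (bp_proj k (bp_dual c)) = k"
    using bp_category_bp_proj Max_bp_proj[OF bracket_pattern_bp_dual[OF bc]] by auto
  then show ?thesis ..
qed

lemma bp_category_atMost_Diff_monoid_of:
  assumes k: "k \<notin> monoid_of C" shows "{..k} - monoid_of C \<in> C"
proof -
  define S where "S = {..k} - monoid_of C"
  have "\<forall>m\<in>S. \<exists>p\<in>C. Max p = m"
    using bp_category_ex_Max_eq unfolding S_def by blast
  then obtain p where p: "\<And>m. m \<in> S \<Longrightarrow> p m \<in> C \<and> Max (p m) = m"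
    by metis
  have "p m \<subseteq> S" if "m \<in> S" for m
  proof
    fix x assume "x \<in> p m"
    then show "x \<in> S"
      using p[OF that] that bracket_pattern_le_Max[of "p m" x] bp_category_bracket_pattern[of "p m"]
        bp_category_subset_Compl_monoid_of[of "p m"] unfolding S_def by auto
  qed
  moreover have "m \<in> p m" if "m \<in> S" for m
    using p[OF that] bracket_pattern_Max_in bp_category_bracket_pattern by metis
  ultimately have "\<Union>(p ` S) = S"
    by blast
  moreover have "\<Union>(p ` S) \<in> C"
    using p k by (intro bp_category_Union) (auto simp: S_def)
  ultimately show ?thesis
    unfolding S_def by simp
qed

lemma submonoid_N0_monoid_of: "submonoid_N0 (monoid_of C)"
  unfolding submonoid_N0_def
proof (intro conjI ballI)
  show "0 \<in> monoid_of C"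
    using zero_notin_completion unfolding monoid_of_def by blast
next
  fix a b assume a: "a \<in> monoid_of C" and b: "b \<in> monoid_of C"
  show "a + b \<in> monoid_of C"
  proof (rule ccontr)
    assume ab: "a + b \<notin> monoid_of C"
    define S where "S = {..a + b} - monoid_of C"
    have "a + b \<in> S" "a \<notin> S" "a < a + b"
      using a ab unfolding S_def by (auto intro: gr0I)
    then have "b \<in> completion S"
      unfolding completion_def by force
    then show False
      using b bp_category_atMost_Diff_monoid_of[OF ab] unfolding S_def monoid_of_def by blast
  qed
qed

text \<open>For \<open>i \<notin> v\<close> below the norm \<open>n\<close> of \<open>v\<close>, the pattern
  \<open>S n \<inter> bp_shift i (S (n - i))\<close> with \<open>S k = {..k} - monoid_of C\<close> contains \<open>v\<close>
  but not \<open>i\<close>; it lies in \<open>C\<close> because \<open>n - i\<close> is a gap of \<open>v\<close>.\<close>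
lemma bp_category_separating:
  assumes v: "bracket_pattern v" "completion v \<subseteq> - monoid_of C"
    and i: "0 < i" "i < Max v" "i \<notin> v"
  shows "\<exists>z\<in>C. Max z = Max v \<and> v \<subseteq> z \<and> i \<notin> z"
proof -
  define n where "n = Max v"
  define S where "S k = {..k} - monoid_of C" for k
  have gap: "k - l \<notin> monoid_of C" if "k \<in> v" "l \<notin> v" "l < k" for k l
    using that v(2) unfolding completion_def by blast
  have v_le: "0 < k \<and> k \<le> n" if "k \<in> v" for k
    using that v(1) bracket_pattern_pos bracket_pattern_le_Max unfolding n_def by blast
  have "n \<in> v"
    using v(1) bracket_pattern_Max_in unfolding n_def by blast
  then have Sn: "S n \<in> C" "Max (S n) = n" and Sni: "S (n - i) \<in> C" "Max (S (n - i)) = n - i"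
    using gap[of n 0] gap[of n i] i v(1) bp_category_atMost_Diff_monoid_of Max_atMost_Diff
    unfolding S_def n_def bracket_pattern_def by auto
  define z where "z = S n \<inter> bp_shift i (S (n - i))"
  have "z \<in> C"
    using bp_category_Int_bp_shift[OF Sn(1) Sni(1)] Sn(2) Sni(2) i unfolding z_def n_def by simp
  moreover have "v \<subseteq> z"
  proof
    fix k assume k: "k \<in> v"
    have "k \<in> S n"
      using k v_le gap[of k 0] v(1) unfolding S_def bracket_pattern_def by auto
    moreover have "k \<in> bp_shift i (S (n - i))"
    proof (cases "k < i")
      case False
      then have "i < k"
        using i k by (cases "i = k") auto
      then have "k - i \<in> S (n - i)"
        using gap[OF k i(3)] v_le[OF k] unfolding S_def by auto
      then show ?thesis
        using \<open>i < k\<close> unfolding bp_shift_def by (force simp: image_iff)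
    qed (use v_le[OF k] in \<open>auto simp: bp_shift_def\<close>)
    ultimately show "k \<in> z"
      unfolding z_def by blast
  qed
  moreover have "Max z = Max v"
    using \<open>v \<subseteq> z\<close> \<open>n \<in> v\<close> unfolding z_def S_def n_def by (intro Max_eqI) auto
  moreover have "i \<notin> z"
    using submonoid_N0_monoid_of unfolding z_def bp_shift_def S_def submonoid_N0_def by auto
  ultimately show ?thesis
    by blast
qed

lemma bp_category_memI:
  assumes v: "bracket_pattern v" "completion v \<subseteq> - monoid_of C"
  shows "v \<in> C"
proof -
  define n where "n = Max v"
  define I where "I = {0<..<n} - v"
  define S where "S = {..n} - monoid_of C"
  have "\<forall>i\<in>I. \<exists>z\<in>C. Max z = n \<and> v \<subseteq> z \<and> i \<notin> z"
    using bp_category_separating[OF v] unfolding I_def n_def by auto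
  then obtain z where z: "\<And>i. i \<in> I \<Longrightarrow> z i \<in> C \<and> Max (z i) = n \<and> v \<subseteq> z i \<and> i \<notin> z i"
    by metis
  have v_gaps: "v \<subseteq> - monoid_of C"
    using v subset_completion[of v] unfolding bracket_pattern_def by blast
  have "n \<in> v"
    using v(1) bracket_pattern_Max_in unfolding n_def by blast
  then have S: "S \<in> C" "Max S = n"
    using v_gaps bp_category_atMost_Diff_monoid_of Max_atMost_Diff unfolding S_def by auto
  have "v \<subseteq> S"
    using v_gaps bracket_pattern_le_Max[OF v(1)] unfolding S_def n_def by auto
  have "\<Inter>(insert S (z ` I)) = v"
  proof (intro equalityI subsetI)
    fix k assume k: "k \<in> \<Inter>(insert S (z ` I))"
    show "k \<in> v"
    proof (rule ccontr)
      assume "k \<notin> v"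
      have "k \<in> S" "0 \<in> monoid_of C"
        using k submonoid_N0_monoid_of unfolding submonoid_N0_def by auto
      then have "k \<in> {0<..n}"
        unfolding S_def by (cases k) auto
      then have "k \<in> I"
        using \<open>k \<notin> v\<close> \<open>n \<in> v\<close> unfolding I_def by (cases "k = n") auto
      then show False
        using k z by blast
    qed
  qed (use \<open>v \<subseteq> S\<close> z in blast)
  moreover have "\<Inter>(insert S (z ` I)) \<in> C"
    using S z unfolding I_def by (intro bp_category_Inter[where n = n]) auto
  ultimately show "v \<in> C"
    by simp
qed

lemma W_of_monoid_of: "W_of (monoid_of C) = C"
  using bp_category_memI bp_category_bracket_pattern
  unfolding W_of_def monoid_of_def by blast

end

theorem proposition7p17:
  shows "bij_betw W_of {M. submonoid_N0 M} {C. bp_category C}"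
  by (rule bij_betw_byWitness[where f' = monoid_of])
    (auto simp: monoid_of_W_of W_of_monoid_of bp_category_W_of submonoid_N0_monoid_of)

end
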